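(* For all integers $k>1$ and $d\ge k$ there exist a finite point set $P\subset\mathbb{R}^d$ and properties $a_1,\dots,a_k\colon P\to\{-1,1\}$, each strictly linearly separable on $P$, such that exactly $2^k-1$ distinct labels occur in $P$, and such that for every unit vector $w\in\mathbb{R}^d$ the following holds: if $a_2,\dots,a_k$ are all strictly linearly separable on the projected set $P'$, then $a_1$ is also strictly linearly separable on $P'$.
   Context: For a finite $P\subset\mathbb{R}^d$ with properties $a_i\colon P\to\{-1,1\}$, write $P^i_{-}=\{p\in P: a_i(p)=-1\}$ and $P^i_{+}=\{p\in P: a_i(p)=1\}$. The label of $p$ is the tuple $(a_1(p),\dots,a_k(p))$. For a unit vector $w$, the projection along $w$ maps $p$ to $p'=p-(p\cdot w)w\in w^\perp$, and $P'$ denotes the image of $P$ (properties are carried over: $a_i(p')=a_i(p)$). Two finite sets $X,Y$ contained in a linear subspace $L$ are strictly linearly separable (in $L$) if there exist a unit vector $v\in L$ and $c\in\mathbb{R}$ with $v\cdot x<c<v\cdot y$ for all $x\in X,y\in Y$; for projected sets $L=w^\perp$, otherwise $L=\mathbb{R}^d$. A property $a_i$ is strictly linearly separable on a set if the corresponding sets $P^i_-$ and $P^i_+$ (resp. their projections) are. *)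

theory Defs
  imports "HOL-Analysis.Analysis"
begin

definition strictly_lin_sep_in :: "'a::euclidean_space set \<Rightarrow> 'a set \<Rightarrow> 'a set \<Rightarrow> bool" where
  "strictly_lin_sep_in L X Y \<longleftrightarrow>
     (\<exists>v c. v \<in> L \<and> norm v = 1 \<and> (\<forall>x\<in>X. v \<bullet> x < c) \<and> (\<forall>y\<in>Y. c < v \<bullet> y))"

definition proj_along :: "'a::euclidean_space \<Rightarrow> 'a \<Rightarrow> 'a" where
  "proj_along w p = p - (p \<bullet> w) *\<^sub>R w"

definition perp_space :: "'a::euclidean_space \<Rightarrow> 'a set" where
  "perp_space w = {x. x \<bullet> w = 0}"

definition neg_part :: "'a set \<Rightarrow> ('a \<Rightarrow> int) \<Rightarrow> 'a set" where
  "neg_part P f = {p \<in> P. f p = -1}"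

definition pos_part :: "'a set \<Rightarrow> ('a \<Rightarrow> int) \<Rightarrow> 'a set" where
  "pos_part P f = {p \<in> P. f p = 1}"

definition prop_sep :: "'a::euclidean_space set \<Rightarrow> ('a \<Rightarrow> int) \<Rightarrow> bool" where
  "prop_sep P f \<longleftrightarrow> strictly_lin_sep_in UNIV (neg_part P f) (pos_part P f)"

definition prop_sep_proj :: "'a::euclidean_space \<Rightarrow> 'a set \<Rightarrow> ('a \<Rightarrow> int) \<Rightarrow> bool" where
  "prop_sep_proj w P f \<longleftrightarrow>
     strictly_lin_sep_in (perp_space w) (proj_along w ` neg_part P f) (proj_along w ` pos_part P f)"

definition label :: "nat \<Rightarrow> (nat \<Rightarrow> 'a \<Rightarrow> int) \<Rightarrow> 'a \<Rightarrow> int list" where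
  "label k a p = map (\<lambda>i. a i p) [1..<k+1]"

end

theory Submission
  imports Defs
begin

text \<open>Let a_2, ..., a_k be the signs of k - 1 coordinates and a_1 a threshold at k on
  their sum, where P consists of the cube {-1,1}^(k-1) together with {-1,2k}^(k-1): a single
  entry 2k pushes the sum above k, so the only label missing is (1,-1,...,-1). If the
  projection direction w has a component off these coordinates, the all-ones functional can
  be tilted along it to become orthogonal to w without changing its values on P, so a_1 stays
  separable. Otherwise pick a coordinate j with |w_j| maximal: every v orthogonal to w has
  |v_j| \<le> sum of the other |v_t|, so v cannot separate the cube point with signs
  (1 at j, -sgn v_t elsewhere) from its negative, and a_(j+1) is not separable after
  projecting.\<close>

definition pos_sign :: "real \<Rightarrow> int" where
  "pos_sign x = (if x > 0 then 1 else -1)"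

lemma inner_proj_along_orthogonal:
  assumes "v \<bullet> w = 0"
  shows "v \<bullet> proj_along w p = v \<bullet> p"
  using assms by (simp add: proj_along_def inner_diff_right)

lemma subspace_perp_space: "subspace (perp_space w)"
  unfolding perp_space_def subspace_def by (auto simp: inner_add_left)

lemma strictly_lin_sep_in_pos_sign:
  assumes "subspace L" "v \<in> L" "v \<noteq> 0"
    and "\<And>p. p \<in> P \<Longrightarrow> v \<bullet> T p \<noteq> c"
    and "\<And>p. p \<in> P \<Longrightarrow> a p = pos_sign (v \<bullet> T p - c)"
  shows "strictly_lin_sep_in L (T ` neg_part P a) (T ` pos_part P a)"
  unfolding strictly_lin_sep_in_def
proof (intro exI conjI ballI)
  have n: "norm v > 0" using assms(3) by simp
  show "v /\<^sub>R norm v \<in> L" using assms(1,2) by (simp add: subspace_scale)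
  show "norm (v /\<^sub>R norm v) = 1" using n by simp
  fix x assume "x \<in> T ` neg_part P a"
  then obtain p where "p \<in> P" "a p = -1" "x = T p" by (auto simp: neg_part_def)
  then have "v \<bullet> x < c" using assms(4,5) by (force simp: pos_sign_def split: if_splits)
  then show "(v /\<^sub>R norm v) \<bullet> x < c / norm v" using n by (simp add: field_simps)
next
  have n: "norm v > 0" using assms(3) by simp
  fix y assume "y \<in> T ` pos_part P a"
  then obtain p where "p \<in> P" "a p = 1" "y = T p" by (auto simp: pos_part_def)
  then have "c < v \<bullet> y" using assms(5) by (force simp: pos_sign_def split: if_splits)
  then show "c / norm v < (v /\<^sub>R norm v) \<bullet> y" using n by (simp add: field_simps)
qed

lemma orthogonal_dominant_coeff_bound:
  fixes v w :: "nat \<Rightarrow> real"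
  assumes "(\<Sum>t<m. v t * w t) = 0" "j < m" "\<forall>t<m. \<bar>w t\<bar> \<le> \<bar>w j\<bar>" "w j \<noteq> 0"
  shows "\<bar>v j\<bar> \<le> (\<Sum>t\<in>{..<m}-{j}. \<bar>v t\<bar>)"
proof -
  have "v j * w j = - (\<Sum>t\<in>{..<m}-{j}. v t * w t)"
    using assms(1,2) by (simp add: sum.remove)
  then have "\<bar>v j\<bar> * \<bar>w j\<bar> = \<bar>\<Sum>t\<in>{..<m}-{j}. v t * w t\<bar>"
    by (metis abs_minus_cancel abs_mult)
  also have "\<dots> \<le> (\<Sum>t\<in>{..<m}-{j}. \<bar>v t\<bar> * \<bar>w j\<bar>)"
    by (rule order_trans[OF sum_abs sum_mono])
      (use assms(3) in \<open>auto simp: abs_mult intro: mult_left_mono\<close>)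
  also have "\<dots> = (\<Sum>t\<in>{..<m}-{j}. \<bar>v t\<bar>) * \<bar>w j\<bar>"
    by (simp add: sum_distrib_right)
  finally show ?thesis using assms(4) by simp
qed

locale coordinate_frame =
  fixes m :: nat and g :: "nat \<Rightarrow> 'n::finite"
  assumes inj_g: "inj_on g {..<m}" and m_pos: "0 < m"
begin

definition emb :: "(nat \<Rightarrow> real) \<Rightarrow> real^'n" where
  "emb f = (\<Sum>t<m. f t *\<^sub>R axis (g t) 1)"

lemma inner_emb: "v \<bullet> emb f = (\<Sum>t<m. f t * v $ g t)"
  by (simp add: emb_def inner_sum_right inner_axis)

lemma emb_nth: "t < m \<Longrightarrow> emb f $ g t = f t"
  using inj_g by (simp add: emb_def axis_def inj_on_eq_iff if_distrib[of "\<lambda>x. _ * x"] cong: if_cong)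

lemma emb_nth_outside: "i \<notin> g ` {..<m} \<Longrightarrow> emb f $ i = 0"
  by (auto simp: emb_def axis_def intro!: sum.neutral)

lemma emb_coords:
  assumes "\<forall>i. i \<notin> g ` {..<m} \<longrightarrow> w $ i = 0"
  shows "emb (\<lambda>t. w $ g t) = w"
  unfolding vec_eq_iff
proof
  fix i
  show "emb (\<lambda>t. w $ g t) $ i = w $ i"
    by (cases "i \<in> g ` {..<m}") (use assms in \<open>auto simp: emb_nth emb_nth_outside\<close>)
qed

definition peak :: real where
  "peak = 2 * real (Suc m)"

definition sign_vectors :: "(nat \<Rightarrow> real) set" where
  "sign_vectors = PiE {..<m} (\<lambda>_. {-1, 1})"

definition peak_vectors :: "(nat \<Rightarrow> real) set" where
  "peak_vectors = PiE {..<m} (\<lambda>_. {-1, peak})"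

definition points :: "(real^'n) set" where
  "points = emb ` (sign_vectors \<union> peak_vectors)"

definition coord_sum :: "real^'n \<Rightarrow> real" where
  "coord_sum p = (\<Sum>t<m. p $ g t)"

definition attr :: "nat \<Rightarrow> real^'n \<Rightarrow> int" where
  "attr i p = (if i = 1 then pos_sign (coord_sum p - real (Suc m)) else pos_sign (p $ g (i - 2)))"

lemma coord_sum_eq_inner: "coord_sum p = emb (\<lambda>_. 1) \<bullet> p"
  by (simp add: coord_sum_def inner_emb inner_commute)

lemma coord_sum_emb: "coord_sum (emb f) = sum f {..<m}"
  by (simp add: coord_sum_def emb_nth)

lemma peak_gt: "real m + 1 < peak"
  by (simp add: peak_def)

lemma sum_le_if_sign_vector:
  assumes "f \<in> sign_vectors"
  shows "sum f {..<m} \<le> real m"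
  using sum_bounded_above[of "{..<m}" f 1] assms by (force simp: sign_vectors_def PiE_iff)

lemma sum_ge_if_peak:
  assumes "f \<in> peak_vectors" "s < m" "f s = peak"
  shows "real m + 3 \<le> sum f {..<m}"
proof -
  have "real (card ({..<m} - {s})) * (-1) \<le> sum f ({..<m} - {s})"
    by (rule sum_bounded_below) (use assms(1) peak_gt in \<open>force simp: peak_vectors_def PiE_iff\<close>)
  moreover have "sum f {..<m} = peak + sum f ({..<m} - {s})"
    using assms(2,3) by (simp add: sum.remove)
  ultimately show ?thesis
    using assms(2) by (simp add: peak_def of_nat_diff)
qed

lemma peak_vector_without_peak:
  assumes "f \<in> peak_vectors" "\<forall>s<m. f s \<noteq> peak"
  shows "f \<in> sign_vectors"
  using assms by (auto simp: peak_vectors_def sign_vectors_def PiE_iff)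

lemma coord_sum_gap:
  assumes "p \<in> points"
  shows "coord_sum p \<le> real m \<or> real m + 3 \<le> coord_sum p"
proof -
  obtain f where f: "p = emb f" "f \<in> sign_vectors \<union> peak_vectors"
    using assms by (auto simp: points_def)
  show ?thesis
  proof (cases "f \<in> peak_vectors \<and> (\<exists>s<m. f s = peak)")
    case True
    then show ?thesis using f(1) sum_ge_if_peak by (auto simp: coord_sum_emb)
  next
    case False
    then have "f \<in> sign_vectors" using f(2) peak_vector_without_peak by blast
    then show ?thesis using f(1) sum_le_if_sign_vector by (simp add: coord_sum_emb)
  qed
qed

lemma attr_values: "attr i p \<in> {-1, 1}"
  by (simp add: attr_def pos_sign_def)

lemma points_coord_ne_zero:
  assumes "p \<in> points" "t < m"
  shows "p $ g t \<noteq> 0"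
proof -
  obtain f where "p = emb f" "f \<in> sign_vectors \<union> peak_vectors"
    using assms(1) by (auto simp: points_def)
  then have "p $ g t = f t" "f t \<in> {-1, 1, peak}"
    using assms(2) by (auto simp: emb_nth sign_vectors_def peak_vectors_def PiE_iff)
  then show ?thesis
    using peak_gt by auto
qed

lemma emb_ones_ne_zero: "emb (\<lambda>_. 1) \<noteq> 0"
  using emb_nth[OF m_pos, of "\<lambda>_. 1"] by auto

lemma attr1_strictly_lin_sep_in:
  assumes "subspace L" "v \<in> L" "v \<noteq> 0" "\<And>p. p \<in> points \<Longrightarrow> v \<bullet> T p = coord_sum p"
  shows "strictly_lin_sep_in L (T ` neg_part points (attr 1)) (T ` pos_part points (attr 1))"
proof (rule strictly_lin_sep_in_pos_sign[OF assms(1-3)])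
  fix p assume "p \<in> points"
  then show "v \<bullet> T p \<noteq> real (Suc m)" and "attr 1 p = pos_sign (v \<bullet> T p - real (Suc m))"
    using coord_sum_gap[of p] assms(4)[of p] by (auto simp: attr_def)
qed

lemma prop_sep_attr:
  assumes "i \<in> {1..Suc m}"
  shows "prop_sep points (attr i)"
  unfolding prop_sep_def
proof (cases "i = 1")
  case True
  show "strictly_lin_sep_in UNIV (neg_part points (attr i)) (pos_part points (attr i))"
    using attr1_strictly_lin_sep_in[OF subspace_UNIV _ emb_ones_ne_zero, of id] coord_sum_eq_inner
    by (simp add: True)
next
  case False
  then have "i - 2 < m" using assms by auto
  then show "strictly_lin_sep_in UNIV (neg_part points (attr i)) (pos_part points (attr i))"
    using strictly_lin_sep_in_pos_sign[OF subspace_UNIV _ _, of "axis (g (i - 2)) 1" points id 0]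
      points_coord_ne_zero False
    by (simp add: attr_def inner_axis' axis_eq_0_iff)
qed

lemma prop_sep_proj_attr1_off_frame:
  assumes "e \<notin> g ` {..<m}" "w $ e \<noteq> 0"
  shows "prop_sep_proj w points (attr 1)"
proof -
  define u where "u = emb (\<lambda>_. 1)"
  \<comment> \<open>tilt the all-ones functional along the coordinate e, on which every point vanishes\<close>
  define v where "v = u - (u \<bullet> w / w $ e) *\<^sub>R axis e 1"
  have vw: "v \<bullet> w = 0"
    using assms(2) by (simp add: v_def inner_diff_left inner_axis')
  have "v $ g 0 = 1"
    using assms(1) m_pos by (auto simp: v_def u_def emb_nth axis_def)
  then have "v \<noteq> 0" by auto
  moreover have "v \<bullet> proj_along w p = coord_sum p" if "p \<in> points" for p
  proof -
    have "p $ e = 0"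
      using that assms(1) by (auto simp: points_def emb_nth_outside)
    have "v \<bullet> proj_along w p = v \<bullet> p"
      by (rule inner_proj_along_orthogonal[OF vw])
    also have "\<dots> = coord_sum p"
      using \<open>p $ e = 0\<close> by (simp add: v_def u_def inner_diff_left inner_axis' coord_sum_eq_inner)
    finally show ?thesis .
  qed
  moreover have "v \<in> perp_space w" using vw by (simp add: perp_space_def)
  ultimately show ?thesis
    unfolding prop_sep_proj_def by (intro attr1_strictly_lin_sep_in subspace_perp_space)
qed

lemma obtain_dominant_coord:
  fixes w :: "real^'n"
  assumes "w \<noteq> 0" "\<forall>i. i \<notin> g ` {..<m} \<longrightarrow> w $ i = 0"
  obtains j where "j < m" "\<forall>t<m. \<bar>w $ g t\<bar> \<le> \<bar>w $ g j\<bar>" "w $ g j \<noteq> 0"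
proof -
  have "Max ((\<lambda>t. \<bar>w $ g t\<bar>) ` {..<m}) \<in> (\<lambda>t. \<bar>w $ g t\<bar>) ` {..<m}"
    using m_pos by (intro Max_in) auto
  then obtain j where j: "j < m" "\<bar>w $ g j\<bar> = Max ((\<lambda>t. \<bar>w $ g t\<bar>) ` {..<m})"
    by auto
  have dom: "\<forall>t<m. \<bar>w $ g t\<bar> \<le> \<bar>w $ g j\<bar>"
    unfolding j(2) by (auto intro: Max_ge)
  moreover have "w $ g j \<noteq> 0"
  proof
    assume "w $ g j = 0"
    then have "emb (\<lambda>t. w $ g t) = emb (\<lambda>_. 0)"
      using dom unfolding emb_def by (intro sum.cong) auto
    then show False
      using assms emb_coords by (simp add: emb_def)
  qed
  ultimately show ?thesis using that j(1) by blast
qed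

lemma not_prop_sep_proj_in_frame:
  fixes w :: "real^'n"
  assumes "w \<noteq> 0" "\<forall>i. i \<notin> g ` {..<m} \<longrightarrow> w $ i = 0"
  obtains j where "j < m" "\<not> prop_sep_proj w points (attr (j + 2))"
proof -
  obtain j where j: "j < m" "\<forall>t<m. \<bar>w $ g t\<bar> \<le> \<bar>w $ g j\<bar>" "w $ g j \<noteq> 0"
    using obtain_dominant_coord[OF assms] .
  have "\<not> prop_sep_proj w points (attr (j + 2))"
  proof
    assume "prop_sep_proj w points (attr (j + 2))"
    then obtain v c where vw: "v \<bullet> w = 0"
      and neg: "\<forall>x\<in>proj_along w ` neg_part points (attr (j + 2)). v \<bullet> x < c"
      and pos: "\<forall>y\<in>proj_along w ` pos_part points (attr (j + 2)). c < v \<bullet> y"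
      unfolding prop_sep_proj_def strictly_lin_sep_in_def perp_space_def by blast
    \<comment> \<open>the sign vector y making v \<bullet> emb y as small as possible subject to y j = 1\<close>
    define y :: "nat \<Rightarrow> real" where
      "y = restrict (\<lambda>t. if t = j then 1 else if 0 \<le> v $ g t then -1 else 1) {..<m}"
    define x where "x = restrict (\<lambda>t. - y t) {..<m}"
    have "y \<in> sign_vectors" "x \<in> sign_vectors"
      by (auto simp: sign_vectors_def x_def y_def)
    moreover have "attr (j + 2) (emb y) = 1" "attr (j + 2) (emb x) = -1"
      using j(1) by (simp_all add: attr_def emb_nth pos_sign_def x_def y_def)
    ultimately have "v \<bullet> emb x < c" "c < v \<bullet> emb y"
      using neg pos inner_proj_along_orthogonal[OF vw]
      by (force simp: points_def neg_part_def pos_part_def)+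
    moreover have "v \<bullet> emb x = - (v \<bullet> emb y)"
      by (simp add: inner_emb x_def sum_negf[symmetric])
    ultimately have "0 < (\<Sum>t<m. y t * v $ g t)"
      by (simp add: inner_emb)
    also have "\<dots> = v $ g j + (\<Sum>t\<in>{..<m}-{j}. - \<bar>v $ g t\<bar>)"
    proof -
      have "(\<Sum>t\<in>{..<m}-{j}. y t * v $ g t) = (\<Sum>t\<in>{..<m}-{j}. - \<bar>v $ g t\<bar>)"
        by (rule sum.cong) (auto simp: y_def)
      then show ?thesis
        using j(1) by (simp add: sum.remove y_def)
    qed
    finally have "(\<Sum>t\<in>{..<m}-{j}. \<bar>v $ g t\<bar>) < \<bar>v $ g j\<bar>"
      unfolding sum_negf by linarith
    moreover have "(\<Sum>t<m. v $ g t * w $ g t) = 0"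
      using vw emb_coords[OF assms(2)] inner_emb[of v "\<lambda>t. w $ g t"]
      by (simp add: mult.commute)
    ultimately show False
      using orthogonal_dominant_coeff_bound[of "\<lambda>t. v $ g t" "\<lambda>t. w $ g t" m j] j by simp
  qed
  then show ?thesis using j(1) that by blast
qed

lemma label_emb:
  "label (Suc m) attr (emb f)
     = pos_sign (sum f {..<m} - real (Suc m)) # map (\<lambda>t. pos_sign (f t)) [0..<m]"
proof (rule nth_equalityI)
  show "length (label (Suc m) attr (emb f))
      = length (pos_sign (sum f {..<m} - real (Suc m)) # map (\<lambda>t. pos_sign (f t)) [0..<m])"
    by (simp del: upt_Suc add: label_def)
  fix n assume "n < length (label (Suc m) attr (emb f))"
  then show "label (Suc m) attr (emb f) ! n
      = (pos_sign (sum f {..<m} - real (Suc m)) # map (\<lambda>t. pos_sign (f t)) [0..<m]) ! n"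
    by (cases n) (auto simp del: upt_Suc simp add: label_def attr_def coord_sum_emb emb_nth)
qed

lemma label_emb_ne_missing: "label (Suc m) attr (emb f) \<noteq> 1 # replicate m (-1)"
proof
  assume eq: "label (Suc m) attr (emb f) = 1 # replicate m (-1)"
  then have "real (Suc m) < sum f {..<m}"
    by (simp add: label_emb pos_sign_def split: if_splits)
  have tail: "map (\<lambda>t. pos_sign (f t)) [0..<m] = replicate m (-1)"
    using eq by (simp add: label_emb)
  have "f t \<le> 0" if "t < m" for t
  proof -
    have "pos_sign (f t) = -1"
      using arg_cong[OF tail, of "\<lambda>xs. xs ! t"] that by simp
    then show ?thesis
      by (simp add: pos_sign_def split: if_splits)
  qed
  then have "sum f {..<m} \<le> 0"
    by (intro sum_nonpos) simp
  with \<open>real (Suc m) < sum f {..<m}\<close> show False by simp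
qed

lemma label_surj_if_not_missing:
  assumes "set l \<subseteq> {-1, 1}" "length l = Suc m" "l \<noteq> 1 # replicate m (-1)"
  shows "l \<in> label (Suc m) attr ` points"
proof -
  obtain b s where l: "l = b # s"
    using assms(2) by (cases l) auto
  have s: "length s = m" and b: "b \<in> {-1, 1}"
    using assms(1,2) unfolding l by auto
  have s_vals: "s ! t = 1 \<or> s ! t = -1" if "t < m" for t
  proof -
    have "s ! t \<in> set s" using that s by simp
    then show ?thesis using assms(1) unfolding l by auto
  qed
  define f where
    "f = restrict (\<lambda>t. if s ! t = 1 then (if b = 1 then peak else 1) else -1) {..<m}"
  have tail: "map (\<lambda>t. pos_sign (f t)) [0..<m] = s"
  proof (rule nth_equalityI)
    fix t assume "t < length (map (\<lambda>t. pos_sign (f t)) [0..<m])"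
    then have "t < m" by simp
    then show "map (\<lambda>t. pos_sign (f t)) [0..<m] ! t = s ! t"
      using s_vals[of t] peak_gt by (auto simp: f_def pos_sign_def)
  qed (simp add: s)
  have head: "pos_sign (sum f {..<m} - real (Suc m)) = b"
  proof (cases "b = 1")
    case True
    have "\<exists>t<m. s ! t = 1"
    proof (rule ccontr)
      assume "\<not> (\<exists>t<m. s ! t = 1)"
      then have "s = replicate m (-1)"
        using s s_vals by (intro nth_equalityI) auto
      then show False using assms(3) True l by simp
    qed
    then obtain t where "t < m" "f t = peak"
      using True by (auto simp: f_def)
    moreover have "f \<in> peak_vectors"
      using True by (auto simp: f_def peak_vectors_def)
    ultimately have "real m + 3 \<le> sum f {..<m}"
      using sum_ge_if_peak by blast
    then show ?thesis
      using True by (simp add: pos_sign_def)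
  next
    case False
    then have "f \<in> sign_vectors"
      by (auto simp: f_def sign_vectors_def)
    then show ?thesis
      using sum_le_if_sign_vector False b by (force simp: pos_sign_def)
  qed
  have "f \<in> sign_vectors \<union> peak_vectors"
    by (auto simp: f_def sign_vectors_def peak_vectors_def)
  then have "emb f \<in> points"
    by (simp add: points_def)
  moreover have "label (Suc m) attr (emb f) = l"
    unfolding label_emb head tail l ..
  ultimately show ?thesis by force
qed

lemma labels_points:
  "label (Suc m) attr ` points = {l. set l \<subseteq> {-1, 1} \<and> length l = Suc m} - {1 # replicate m (-1)}"
proof (intro equalityI subsetI)
  fix l assume "l \<in> label (Suc m) attr ` points"
  then obtain f where "l = label (Suc m) attr (emb f)"
    by (auto simp: points_def)
  then show "l \<in> {l. set l \<subseteq> {-1, 1} \<and> length l = Suc m} - {1 # replicate m (-1)}"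
    using label_emb_ne_missing by (auto simp: label_emb pos_sign_def)
qed (use label_surj_if_not_missing in blast)

lemma card_labels: "card (label (Suc m) attr ` points) = 2 ^ Suc m - 1"
proof -
  have "card {l. set l \<subseteq> {-1, 1::int} \<and> length l = Suc m} = card {-1, 1::int} ^ Suc m"
    by (rule card_lists_length_eq) simp
  also have "\<dots> = 2 ^ Suc m"
    by (simp add: numeral_2_eq_2)
  finally show ?thesis
    unfolding labels_points
    by (subst card_Diff_singleton) (auto simp: finite_lists_length_eq)
qed

lemma finite_points: "finite points"
  by (simp add: points_def sign_vectors_def peak_vectors_def finite_PiE)

lemma prop_sep_proj_attr1:
  assumes "w \<noteq> 0" "\<forall>i\<in>{2..Suc m}. prop_sep_proj w points (attr i)"
  shows "prop_sep_proj w points (attr 1)"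
proof (cases "\<exists>e. e \<notin> g ` {..<m} \<and> w $ e \<noteq> 0")
  case True
  then show ?thesis
    using prop_sep_proj_attr1_off_frame by blast
next
  case False
  then obtain j where "j < m" "\<not> prop_sep_proj w points (attr (j + 2))"
    using not_prop_sep_proj_in_frame[OF assms(1)] by blast
  then show ?thesis
    using assms(2) by force
qed

end

theorem mainTheorem2:
  fixes k :: nat
  assumes "k > 1" and "CARD('n::finite) \<ge> k"
  shows "\<exists>(P :: (real^'n) set) (a :: nat \<Rightarrow> real^'n \<Rightarrow> int).
           finite P
         \<and> (\<forall>i\<in>{1..k}. \<forall>p\<in>P. a i p \<in> {-1, 1})
         \<and> (\<forall>i\<in>{1..k}. prop_sep P (a i))
         \<and> card (label k a ` P) = 2 ^ k - 1
         \<and> (\<forall>w :: real^'n. norm w = 1 \<longrightarrow>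
              (\<forall>i\<in>{2..k}. prop_sep_proj w P (a i)) \<longrightarrow> prop_sep_proj w P (a 1))"
proof -
  obtain m where k: "k = Suc m" "0 < m"
    using assms(1) by (cases k) auto
  obtain g :: "nat \<Rightarrow> 'n" where "inj_on g {..<m}"
    using card_le_inj[of "{..<m}" "UNIV :: 'n set"] assms(2) k by auto
  then interpret coordinate_frame m g
    using k(2) by unfold_locales
  show ?thesis
    unfolding k(1)
    by (intro exI[of _ points] exI[of _ attr] conjI ballI allI impI finite_points attr_values
        prop_sep_attr card_labels prop_sep_proj_attr1) auto
qed

end
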